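(* Let $\Theta_i,\Theta_j,\Theta_k\in[0,\pi)$ satisfy $\cos\Theta_i+\cos\Theta_j\cos\Theta_k\ge0$, $\cos\Theta_j+\cos\Theta_k\cos\Theta_i\ge0$, $\cos\Theta_k+\cos\Theta_i\cos\Theta_j\ge0$. In hyperbolic geometry, for every $\epsilon>0$ there exists $L>0$ such that for all $r_i,r_j,r_k>0$ with $r_i>L$, the inner angle $\vartheta_i$ at the center of radius $r_i$ of the triangle of centers of three disks of radii $r_i,r_j,r_k$ meeting in exterior intersection angles $\Theta_i,\Theta_j,\Theta_k$ satisfies $\vartheta_i<\epsilon$. In particular $\lim_{r_i\to+\infty}\vartheta_i=0$ (uniformly in $r_j,r_k$).
   Context: The triangle is the hyperbolic triangle with side lengths $l_i,l_j,l_k$ given by $\cosh l_i=\cosh r_j\cosh r_k+\sinh r_j\sinh r_k\cos\Theta_i$ and cyclically; $\vartheta_i$ is the angle opposite $l_i$. *)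

theory Defs
  imports Complex_Main
begin

text \<open>Hyperbolic length of the edge joining the centers of two disks of radii
  ra, rb that meet at exterior intersection angle Th:
  cosh l = cosh ra cosh rb + sinh ra sinh rb cos Th.\<close>
definition hyp_edge :: "real \<Rightarrow> real \<Rightarrow> real \<Rightarrow> real" where
  "hyp_edge ra rb Th = arcosh (cosh ra * cosh rb + sinh ra * sinh rb * cos Th)"

text \<open>Inner angle opposite the side of length a in the hyperbolic triangle with
  side lengths a, b, c (hyperbolic law of cosines).\<close>
definition hyp_angle :: "real \<Rightarrow> real \<Rightarrow> real \<Rightarrow> real" where
  "hyp_angle a b c = arccos ((cosh b * cosh c - cosh a) / (sinh b * sinh c))"

definition inner_angle_i :: "real \<Rightarrow> real \<Rightarrow> real \<Rightarrow> real \<Rightarrow> real \<Rightarrow> real \<Rightarrow> real" where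
  "inner_angle_i Thi Thj Thk ri rj rk =
     hyp_angle (hyp_edge rj rk Thi) (hyp_edge rk ri Thj) (hyp_edge ri rj Thk)"

end

theory Submission
  imports Defs
begin

text \<open>Write A, B, C for the hyperbolic cosines of the sides opposite the centers of radii
  ri, rj, rk. By the law of cosines cos \<vartheta>_i = (BC - A) / sqrt ((B^2 - 1)(C^2 - 1)),
  and (B^2 - 1)(C^2 - 1) - (BC - A)^2 is the Gram determinant 1 + 2ABC - A^2 - B^2 - C^2,
  which the hypotheses on the intersection angles turn into a sum of nonnegative terms; hence
  the cosine is at most 1, and it is at least 1 - 4A/(BC) once B, C \<ge> 2.
  Now A \<le> 2 cosh rj cosh rk, whereas B \<ge> \<kappa> cosh rk cosh ri and
  C \<ge> \<kappa> cosh ri cosh rj with \<kappa> = min 1 (1 + min (cos Thj) (cos Thk)) > 0,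
  so A/(BC) \<le> 2/(\<kappa> cosh ri)^2 tends to 0 uniformly in rj, rk.\<close>

definition cosh_edge :: "real \<Rightarrow> real \<Rightarrow> real \<Rightarrow> real" where
  "cosh_edge ra rb Th = cosh ra * cosh rb + sinh ra * sinh rb * cos Th"

definition gram3 :: "real \<Rightarrow> real \<Rightarrow> real \<Rightarrow> real" where
  "gram3 a b c = 1 + 2 * a * b * c - a\<^sup>2 - b\<^sup>2 - c\<^sup>2"

lemma hyp_edge_eq_arcosh_cosh_edge: "hyp_edge ra rb Th = arcosh (cosh_edge ra rb Th)"
  by (simp add: hyp_edge_def cosh_edge_def)

lemma cosh_edge_ge_1:
  assumes "0 \<le> ra" "0 \<le> rb"
  shows "1 \<le> cosh_edge ra rb Th"
proof -
  have "sinh ra * sinh rb * (- 1) \<le> sinh ra * sinh rb * cos Th"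
    using assms by (intro mult_left_mono) auto
  moreover have "cosh ra * cosh rb - sinh ra * sinh rb = cosh (ra - rb)"
    by (simp add: cosh_diff)
  ultimately show ?thesis
    using cosh_real_ge_1[of "ra - rb"] by (simp add: cosh_edge_def)
qed

lemma abs_sinh_le_cosh_real: "\<bar>sinh (x :: real)\<bar> \<le> cosh x"
  using sinh_le_cosh_real[of "\<bar>x\<bar>"] by simp

lemma cosh_edge_le: "cosh_edge ra rb Th \<le> 2 * (cosh ra * cosh rb)"
proof -
  have "\<bar>sinh ra * sinh rb * cos Th\<bar> \<le> cosh ra * cosh rb * 1"
    unfolding abs_mult
    by (intro mult_mono) (auto simp: abs_sinh_le_cosh_real cosh_real_nonneg)
  then show ?thesis by (simp add: cosh_edge_def)
qed

lemma cosh_edge_ge: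
  assumes "0 \<le> ra" "0 \<le> rb" "\<kappa> \<le> 1" "\<kappa> \<le> 1 + cos Th"
  shows "\<kappa> * (cosh ra * cosh rb) \<le> cosh_edge ra rb Th"
proof (cases "0 \<le> cos Th")
  case True
  then have "0 \<le> sinh ra * sinh rb * cos Th"
    using assms by simp
  moreover have "\<kappa> * (cosh ra * cosh rb) \<le> 1 * (cosh ra * cosh rb)"
    using assms by (intro mult_right_mono) (auto simp: cosh_real_nonneg)
  ultimately show ?thesis unfolding cosh_edge_def by linarith
next
  case False
  have "sinh ra * sinh rb \<le> cosh ra * cosh rb"
    using assms by (intro mult_mono) (auto simp: sinh_le_cosh_real)
  then have "cosh ra * cosh rb * cos Th \<le> sinh ra * sinh rb * cos Th"
    using False by (intro mult_right_mono_neg) auto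
  moreover have "\<kappa> * (cosh ra * cosh rb) \<le> (1 + cos Th) * (cosh ra * cosh rb)"
    using assms by (intro mult_right_mono) (auto simp: cosh_real_nonneg)
  ultimately show ?thesis by (simp add: cosh_edge_def algebra_simps)
qed

lemma gram3_cosh_edge:
  "gram3 (cosh_edge rj rk Thi) (cosh_edge rk ri Thj) (cosh_edge ri rj Thk) =
     (sinh rj * sinh rk * sin Thi)\<^sup>2 + (sinh rk * sinh ri * sin Thj)\<^sup>2
   + (sinh ri * sinh rj * sin Thk)\<^sup>2
   + 2 * (sinh ri * sinh rj * sinh rk)\<^sup>2 * (1 + cos Thi * cos Thj * cos Thk)
   + 2 * cosh rj * cosh rk * sinh ri * (sinh ri * sinh rj * sinh rk) * (cos Thi + cos Thj * cos Thk)
   + 2 * cosh rk * cosh ri * sinh rj * (sinh ri * sinh rj * sinh rk) * (cos Thj + cos Thk * cos Thi)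
   + 2 * cosh ri * cosh rj * sinh rk * (sinh ri * sinh rj * sinh rk) * (cos Thk + cos Thi * cos Thj)"
proof -
  have "cosh ri ^ 2 = sinh ri ^ 2 + 1" "cosh rj ^ 2 = sinh rj ^ 2 + 1" "cosh rk ^ 2 = sinh rk ^ 2 + 1"
    "sin Thi ^ 2 = 1 - cos Thi ^ 2" "sin Thj ^ 2 = 1 - cos Thj ^ 2" "sin Thk ^ 2 = 1 - cos Thk ^ 2"
    by (simp_all add: cosh_square_eq sin_squared_eq)
  then show ?thesis
    unfolding gram3_def cosh_edge_def by algebra
qed

lemma gram3_cosh_edge_nonneg:
  assumes "0 \<le> ri" "0 \<le> rj" "0 \<le> rk"
    and "cos Thi + cos Thj * cos Thk \<ge> 0"
    and "cos Thj + cos Thk * cos Thi \<ge> 0"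
    and "cos Thk + cos Thi * cos Thj \<ge> 0"
  shows "0 \<le> gram3 (cosh_edge rj rk Thi) (cosh_edge rk ri Thj) (cosh_edge ri rj Thk)"
proof -
  have "\<bar>cos Thi * cos Thj * cos Thk\<bar> \<le> 1"
    unfolding abs_mult by (intro mult_le_one) auto
  then have "0 \<le> 1 + cos Thi * cos Thj * cos Thk"
    by linarith
  then show ?thesis
    unfolding gram3_cosh_edge using assms by (simp add: cosh_real_nonneg)
qed

lemma hyp_angle_arcosh_less:
  assumes "1 \<le> A" "2 \<le> B" "2 \<le> C" "0 \<le> gram3 A B C"
    and "0 < e" "e < pi" "4 * A < (1 - cos e) * (B * C)"
  shows "hyp_angle (arcosh A) (arcosh B) (arcosh C) < e"
proof -
  define s where "s = sqrt ((B\<^sup>2 - 1) * (C\<^sup>2 - 1))"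
  have angle: "hyp_angle (arcosh A) (arcosh B) (arcosh C) = arccos ((B * C - A) / s)"
    using assms(1-3)
    by (simp add: hyp_angle_def sinh_arcosh_real s_def real_sqrt_mult)
  have half: "x / 2 \<le> sqrt (x\<^sup>2 - 1)" if "2 \<le> x" for x :: real
  proof (rule real_le_rsqrt)
    have "2 * 2 \<le> x * x"
      using that by (intro mult_mono) auto
    then show "(x / 2)\<^sup>2 \<le> x\<^sup>2 - 1"
      by (simp add: power2_eq_square)
  qed
  have "(B / 2) * (C / 2) \<le> s"
    unfolding s_def real_sqrt_mult using assms(2,3) half by (intro mult_mono) auto
  moreover have "0 < (B / 2) * (C / 2)"
    using assms(2,3) by simp
  ultimately have s_lower: "B * C \<le> 4 * s" and s_pos: "0 < s"
    by linarith+
  have "(B * C)\<^sup>2 - (B\<^sup>2 - 1) * (C\<^sup>2 - 1) = B\<^sup>2 + C\<^sup>2 - 1"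
    by algebra
  moreover have "1 \<le> B\<^sup>2"
    using assms(2) by (simp add: one_le_power)
  ultimately have "(B\<^sup>2 - 1) * (C\<^sup>2 - 1) \<le> (B * C)\<^sup>2"
    using zero_le_power2[of C] by linarith
  then have s_upper: "s \<le> B * C"
    unfolding s_def using assms(2,3) by (intro real_le_lsqrt) auto
  have "(B * C - A)\<^sup>2 \<le> (B\<^sup>2 - 1) * (C\<^sup>2 - 1)"
    using assms(4) unfolding gram3_def by (simp add: power2_eq_square algebra_simps)
  then have cos_le_1: "(B * C - A) / s \<le> 1"
    using s_pos unfolding s_def[symmetric] by (simp add: real_le_rsqrt s_def)
  have "0 \<le> 1 - cos e" by simp
  then have "4 * A < (1 - cos e) * (4 * s)"
    using assms(7) s_lower by (meson less_le_trans mult_left_mono)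
  then have "cos e < (B * C - A) / s"
    using s_pos s_upper by (simp add: pos_less_divide_eq algebra_simps)
  then have "arccos ((B * C - A) / s) < arccos (cos e)"
    using cos_le_1 by (intro arccos_less_arccos) auto
  then show ?thesis
    using angle assms(5,6) by (simp add: arccos_cos)
qed

lemma inner_angle_i_less:
  assumes "0 \<le> ri" "0 \<le> rj" "0 \<le> rk"
    and "cos Thi + cos Thj * cos Thk \<ge> 0"
    and "cos Thj + cos Thk * cos Thi \<ge> 0"
    and "cos Thk + cos Thi * cos Thj \<ge> 0"
    and "\<kappa> \<le> 1" "\<kappa> \<le> 1 + cos Thj" "\<kappa> \<le> 1 + cos Thk"
    and "0 < e" "e < pi"
    and large: "2 \<le> \<kappa> * cosh ri" "8 < (1 - cos e) * (\<kappa> * cosh ri)\<^sup>2"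
  shows "inner_angle_i Thi Thj Thk ri rj rk < e"
proof -
  define A where "A = cosh_edge rj rk Thi"
  define B where "B = cosh_edge rk ri Thj"
  define C where "C = cosh_edge ri rj Thk"
  define t where "t = \<kappa> * cosh ri"
  have B_lower: "t * cosh rk \<le> B" and C_lower: "t * cosh rj \<le> C"
    using cosh_edge_ge[of rk ri \<kappa> Thj] cosh_edge_ge[of ri rj \<kappa> Thk] assms
    by (simp_all add: B_def C_def t_def algebra_simps)
  have "t * 1 \<le> t * cosh rk" "t * 1 \<le> t * cosh rj"
    using large(1) by (intro mult_left_mono; simp add: t_def cosh_real_ge_1)+
  then have "2 \<le> B" "2 \<le> C"
    using B_lower C_lower large(1) by (simp_all add: t_def)
  have "(t * cosh rk) * (t * cosh rj) \<le> B * C"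
    using \<open>2 \<le> B\<close> large(1) by (intro mult_mono B_lower C_lower) (simp_all add: t_def)
  then have "t\<^sup>2 * (cosh rj * cosh rk) \<le> B * C"
    by (simp add: power2_eq_square algebra_simps)
  then have "(1 - cos e) * (t\<^sup>2 * (cosh rj * cosh rk)) \<le> (1 - cos e) * (B * C)"
    by (intro mult_left_mono) auto
  moreover have "8 * (cosh rj * cosh rk) < (1 - cos e) * t\<^sup>2 * (cosh rj * cosh rk)"
    using large(2) by (intro mult_strict_right_mono) (simp_all add: t_def cosh_real_pos)
  moreover have "4 * A \<le> 8 * (cosh rj * cosh rk)"
    using cosh_edge_le[of rj rk Thi] by (simp add: A_def)
  ultimately have "4 * A < (1 - cos e) * (B * C)"
    by (simp add: algebra_simps)
  moreover have "1 \<le> A" "0 \<le> gram3 A B C"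
    using cosh_edge_ge_1 gram3_cosh_edge_nonneg assms(1-6) by (simp_all add: A_def B_def C_def)
  ultimately have "hyp_angle (arcosh A) (arcosh B) (arcosh C) < e"
    using hyp_angle_arcosh_less \<open>2 \<le> B\<close> \<open>2 \<le> C\<close> assms(10,11) by blast
  then show ?thesis
    by (simp add: inner_angle_i_def hyp_edge_eq_arcosh_cosh_edge A_def B_def C_def)
qed

lemma eventually_inner_angle_i_less:
  assumes "cos Thi + cos Thj * cos Thk \<ge> 0"
    and "cos Thj + cos Thk * cos Thi \<ge> 0"
    and "cos Thk + cos Thi * cos Thj \<ge> 0"
    and "-1 < cos Thj" "-1 < cos Thk" "0 < e" "e < pi"
  shows "\<forall>\<^sub>F ri in at_top. \<forall>rj \<ge> 0. \<forall>rk \<ge> 0. inner_angle_i Thi Thj Thk ri rj rk < e"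
proof -
  define \<eta> where "\<eta> = 1 - cos e"
  have "0 < \<eta>"
    using cos_monotone_0_pi[of 0 e] assms(6,7) by (simp add: \<eta>_def)
  obtain \<kappa> where \<kappa>: "0 < \<kappa>" "\<kappa> \<le> 1" "\<kappa> \<le> 1 + cos Thj" "\<kappa> \<le> 1 + cos Thk"
    using assms(4,5) by (intro that[of "min 1 (1 + min (cos Thj) (cos Thk))"]) auto
  have "filterlim (\<lambda>r. \<kappa> * cosh r) at_top at_top"
    using filterlim_tendsto_pos_mult_at_top[OF tendsto_const \<kappa>(1) cosh_real_at_top] .
  then have "\<forall>\<^sub>F ri in at_top. max 2 (8 / \<eta>) < \<kappa> * cosh ri \<and> 0 \<le> ri"
    unfolding filterlim_at_top_dense using eventually_ge_at_top eventually_conj by blast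
  then show ?thesis
  proof (rule eventually_mono, safe)
    fix ri rj rk :: real
    assume "max 2 (8 / \<eta>) < \<kappa> * cosh ri" "0 \<le> ri" "0 \<le> rj" "0 \<le> rk"
    moreover have "8 * 1 < (\<eta> * (\<kappa> * cosh ri)) * (\<kappa> * cosh ri)"
      using calculation(1) \<open>0 < \<eta>\<close> by (intro mult_strict_mono) (simp_all add: field_simps)
    ultimately show "inner_angle_i Thi Thj Thk ri rj rk < e"
      using assms(1-3,6,7) \<kappa>
      by (intro inner_angle_i_less) (simp_all add: \<eta>_def power2_eq_square algebra_simps)
  qed
qed

theorem lemma1p6:
  fixes Thi Thj Thk :: real
  assumes "Thi \<in> {0..<pi}" "Thj \<in> {0..<pi}" "Thk \<in> {0..<pi}"
    and "cos Thi + cos Thj * cos Thk \<ge> 0"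
    and "cos Thj + cos Thk * cos Thi \<ge> 0"
    and "cos Thk + cos Thi * cos Thj \<ge> 0"
  shows "\<forall>\<epsilon>>0. \<exists>L>0. \<forall>ri rj rk. ri > 0 \<longrightarrow> rj > 0 \<longrightarrow> rk > 0 \<longrightarrow> ri > L \<longrightarrow>
           inner_angle_i Thi Thj Thk ri rj rk < \<epsilon>"
proof (intro allI impI)
  fix \<epsilon> :: real
  assume "0 < \<epsilon>"
  define e where "e = min \<epsilon> (pi / 2)"
  have e: "0 < e" "e < pi" "e \<le> \<epsilon>"
    using \<open>0 < \<epsilon>\<close> pi_gt_zero by (auto simp: e_def min_def)
  have "-1 < cos Thj" "-1 < cos Thk"
    using cos_monotone_0_pi[of Thj pi] cos_monotone_0_pi[of Thk pi] assms(2,3) by auto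
  with eventually_inner_angle_i_less[OF assms(4-6) _ _ e(1,2)]
  obtain N where N: "\<And>ri rj rk. N \<le> ri \<Longrightarrow> 0 \<le> rj \<Longrightarrow> 0 \<le> rk \<Longrightarrow>
      inner_angle_i Thi Thj Thk ri rj rk < e"
    by (auto simp: eventually_at_top_linorder)
  show "\<exists>L>0. \<forall>ri rj rk. ri > 0 \<longrightarrow> rj > 0 \<longrightarrow> rk > 0 \<longrightarrow> ri > L \<longrightarrow>
           inner_angle_i Thi Thj Thk ri rj rk < \<epsilon>"
    using e(3) by (intro exI[of _ "max N 1"]) (auto intro!: order.strict_trans2[OF N])
qed

end
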